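(* Let $\alpha\in[0,1)$, $c_{\mathrm{TX}}>0$, $\phi>0$, $\theta=\phi/c_{\mathrm{TX}}$, integers $N_S\geq B\geq 1$, $\lambda_{\mathrm{th}}=(1+\sqrt{\theta})^{-2}$, $v_{\mathrm{th}}(\lambda,0)=\sqrt{\lambda\theta}+\frac{\lambda}{2}+\sqrt{\lambda}\sqrt{\sqrt{\lambda\theta}+\frac{\lambda}{4}}$, and for $j\geq0$ let $\eta_j(\lambda)=1-\alpha^{j}(1-\sqrt{\lambda\theta})-v_{\mathrm{th}}(\lambda,0)$ and let $\lambda_j^*$ be the unique solution in $[0,\lambda_{\mathrm{th}}]$ of $\eta_j(\lambda)=0$. For $\lambda\in(0,\lambda_{\mathrm{th}})$ and $p_0\in[0,1]$, consider the process $V_0=1$ and for $k\geq0$: if $V_k>v_{\mathrm{th}}(\lambda,0)$ set $t_k=1$, $S_{M,k}=\frac{1}{\sqrt{\lambda\theta}}-\frac{1}{V_k}$; if $V_k<v_{\mathrm{th}}(\lambda,0)$ set $t_k=S_{M,k}=0$; if $V_k=v_{\mathrm{th}}(\lambda,0)$ set $t_k=1$, $S_{M,k}=\frac{1}{\sqrt{\lambda\theta}}-\frac{1}{V_k}$ with probability $p_0$ (independently over time) and $t_k=S_{M,k}=0$ otherwise; then $\hat V_k=\frac{V_k}{1+V_kt_kS_{M,k}}$ and $V_{k+1}=1-\alpha(1-\hat V_k)$. Let $\bar M_{MP}^{\lambda,p_0}=\lim_{T\to\infty}\mathbb E\left[\frac{1}{T+1}\sum_{k=0}^T\hat V_k\right]$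 and $\bar C_{MP}^{\lambda,p_0}=\lim_{T\to\infty}\mathbb E\left[\frac{1}{T+1}\sum_{k=0}^T\frac{1}{N_S}t_k(c_{\mathrm{TX}}+\phi S_{M,k})\right]$. Let $J\geq1$ be an integer, $\lambda\in(\lambda_{J-1}^*,\lambda_J^*]$ and $\hat V^*=\sqrt{\lambda\theta}$. (i) If $\lambda=\lambda_J^*$, then $$\bar M_{MP}^{\lambda,p_0}=1-\frac{\{1-\alpha^{J}[1-(1-\alpha)(1-p_0)]\}(1-\hat V^* )}{(J+1-p_0)(1-\alpha)},$$ $$\bar C_{MP}^{\lambda,p_0}=\frac{1}{N_S(J+1-p_0)}\left[c_{\mathrm{TX}}+\phi\frac{1-\hat V^*}{\hat V^*}\left(p_0\frac{1-\alpha^{J}}{1-\alpha^{J}(1-\hat V^* )}+(1-p_0)\frac{1-\alpha^{J+1}}{1-\alpha^{J+1}(1-\hat V^* )}\right)\right].$$ (ii) Otherwise ($\lambda\in(\lambda_{J-1}^*,\lambda_J^* )$), writing $\bar M_{MP}^{\lambda,1},\bar C_{MP}^{\lambda,1}$ for the (then $p_0$-independent) quantities, $$\bar M_{MP}^{\lambda,1}=1-\frac{(1-\alpha^{J})(1-\hat V^* )}{J(1-\alpha)},\qquad \bar C_{MP}^{\lambda,1}=\frac{1}{N_S J}\left[c_{\mathrm{TX}}+\phi\frac{1}{\hat V^*}\frac{(1-\alpha^{J})(1-\hat V^* )}{1-\alpha^{J}(1-\hat V^* )}\right].$$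
   Context: This is the myopic policy of the coordinated scheme with infinite ambient SNR: the fusion center tracks $X_{k+1}=\sqrt\alpha X_k+Z_k$ with unit stationary variance; $V_k$ is the prior variance, $\hat V_k$ the posterior variance (MSE) at slot $k$; at most one sensor (out of $N_S$) is activated, with local measurement SNR $S_{M,k}$ and cost $c_{\mathrm{TX}}+\phi S_{M,k}$; the per-sensor cost averages the network cost over the $N_S$ sensors. *)

theory Defs
  imports "HOL-Probability.Probability"
begin

definition vth :: "real \<Rightarrow> real \<Rightarrow> real" where
  "vth \<theta> lam = sqrt (lam * \<theta>) + lam / 2 + sqrt lam * sqrt (sqrt (lam * \<theta>) + lam / 4)"

definition lam_th :: "real \<Rightarrow> real" where
  "lam_th \<theta> = 1 / (1 + sqrt \<theta>)^2"

definition eta :: "real \<Rightarrow> real \<Rightarrow> nat \<Rightarrow> real \<Rightarrow> real" where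
  "eta \<alpha> \<theta> j lam = 1 - \<alpha>^j * (1 - sqrt (lam * \<theta>)) - vth \<theta> lam"

definition lam_star :: "real \<Rightarrow> real \<Rightarrow> nat \<Rightarrow> real" where
  "lam_star \<alpha> \<theta> j = (THE l. l \<in> {0..lam_th \<theta>} \<and> eta \<alpha> \<theta> j l = 0)"

text \<open>Activation decision at prior variance V; b is the (Bernoulli p0) coin used at the threshold.\<close>
definition active :: "real \<Rightarrow> real \<Rightarrow> real \<Rightarrow> bool \<Rightarrow> bool" where
  "active \<theta> lam V b = (V > vth \<theta> lam \<or> (V = vth \<theta> lam \<and> b))"

definition tk :: "real \<Rightarrow> real \<Rightarrow> real \<Rightarrow> bool \<Rightarrow> real" where
  "tk \<theta> lam V b = (if active \<theta> lam V b then 1 else 0)"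

definition SM :: "real \<Rightarrow> real \<Rightarrow> real \<Rightarrow> bool \<Rightarrow> real" where
  "SM \<theta> lam V b = (if active \<theta> lam V b then 1 / sqrt (lam * \<theta>) - 1 / V else 0)"

definition Vpost :: "real \<Rightarrow> real \<Rightarrow> real \<Rightarrow> bool \<Rightarrow> real" where
  "Vpost \<theta> lam V b = V / (1 + V * tk \<theta> lam V b * SM \<theta> lam V b)"

fun Vprior :: "real \<Rightarrow> real \<Rightarrow> real \<Rightarrow> (nat \<Rightarrow> bool) \<Rightarrow> nat \<Rightarrow> real" where
  "Vprior \<alpha> \<theta> lam b 0 = 1"
| "Vprior \<alpha> \<theta> lam b (Suc k) =
     1 - \<alpha> * (1 - Vpost \<theta> lam (Vprior \<alpha> \<theta> lam b k) (b k))"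

definition coins :: "real \<Rightarrow> nat \<Rightarrow> (nat \<Rightarrow> bool) pmf" where
  "coins p T = Pi_pmf {..T} False (\<lambda>_. bernoulli_pmf p)"

definition Mavg :: "real \<Rightarrow> real \<Rightarrow> real \<Rightarrow> real \<Rightarrow> nat \<Rightarrow> real" where
  "Mavg \<alpha> \<theta> lam p T = measure_pmf.expectation (coins p T)
     (\<lambda>b. (\<Sum>k\<le>T. Vpost \<theta> lam (Vprior \<alpha> \<theta> lam b k) (b k)) / real (T + 1))"

definition Cavg :: "real \<Rightarrow> real \<Rightarrow> real \<Rightarrow> nat \<Rightarrow> real \<Rightarrow> real \<Rightarrow> nat \<Rightarrow> real" where
  "Cavg \<alpha> cTX \<phi> NS lam p T = measure_pmf.expectation (coins p T)
     (\<lambda>b. (\<Sum>k\<le>T. (1 / real NS) *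
        tk (\<phi> / cTX) lam (Vprior \<alpha> (\<phi> / cTX) lam b k) (b k) *
        (cTX + \<phi> * SM (\<phi> / cTX) lam (Vprior \<alpha> (\<phi> / cTX) lam b k) (b k))) / real (T + 1))"

end

theory Submission
  imports Defs
begin

text \<open>An activation sets the posterior variance to Vstar = sqrt (lam \<theta>), whatever the prior
  was, and an idle slot maps V to 1 - \<alpha> (1 - V). Hence the prior variance is a function of the
  age m (slots since the last activation), namely 1 - \<alpha>^m (1 - Vstar), and the age is a Markov
  chain driven by the i.i.d. threshold coins. Since prior - vth at age m is eta_m(lam), which
  increases with m and decreases in lam, the window lam_{J-1}^* < lam \<le> lam_J^* makes the ages
  1, ..., J-1 idle: for lam < lam_J^* age J always activates (cycles of length J), while for
  lam = lam_J^* the prior at age J sits exactly at the threshold, so the coin decides between a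
  cycle of length J and one of length J+1. The long-run averages are then reward per cycle over
  expected cycle length, which we obtain from an explicit solution of the Poisson equation of the
  age chain by telescoping.\<close>

fun state_path :: "('s \<Rightarrow> bool \<Rightarrow> 's) \<Rightarrow> 's \<Rightarrow> (nat \<Rightarrow> bool) \<Rightarrow> nat \<Rightarrow> 's" where
  "state_path nx s0 b 0 = s0"
| "state_path nx s0 b (Suc k) = nx (state_path nx s0 b k) (b k)"

lemma state_path_cong:
  "(\<And>i. i < k \<Longrightarrow> b i = b' i) \<Longrightarrow> state_path nx s0 b k = state_path nx s0 b' k"
  by (induction k) auto

lemma state_path_fun_upd: "state_path nx s0 (b(k := y)) k = state_path nx s0 b k"
  by (rule state_path_cong) auto

lemma state_path_in_invariant:
  assumes "s0 \<in> S" "\<And>m y. m \<in> S \<Longrightarrow> nx m y \<in> S"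
  shows "state_path nx s0 b k \<in> S"
  using assms by (induction k) auto

definition bernoulli_mean :: "real \<Rightarrow> (bool \<Rightarrow> real) \<Rightarrow> real" where
  "bernoulli_mean p f = p * f True + (1 - p) * f False"

lemma bernoulli_mean_eq_const: "(\<And>y. f y = a) \<Longrightarrow> bernoulli_mean p f = a"
  by (simp add: bernoulli_mean_def algebra_simps)

lemma bernoulli_mean_add_const [simp]: "bernoulli_mean p (\<lambda>y. f y + a) = bernoulli_mean p f + a"
  by (simp add: bernoulli_mean_def algebra_simps)

definition avg_reward ::
    "real \<Rightarrow> ('s \<Rightarrow> bool \<Rightarrow> 's) \<Rightarrow> 's \<Rightarrow> ('s \<Rightarrow> bool \<Rightarrow> real) \<Rightarrow> nat \<Rightarrow> real" where
  "avg_reward p nx s0 g T = measure_pmf.expectation (coins p T)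
     (\<lambda>b. (\<Sum>k\<le>T. g (state_path nx s0 b k) (b k)) / real (T + 1))"

lemma finite_set_Pi_pmf_bernoulli:
  "finite A \<Longrightarrow> finite (set_pmf (Pi_pmf A False (\<lambda>_. bernoulli_pmf p)))"
  by (subst set_Pi_pmf) auto

lemma integrable_coins [simp]: "integrable (coins p T) (f :: _ \<Rightarrow> real)"
  unfolding coins_def by (rule integrable_measure_pmf_finite[OF finite_set_Pi_pmf_bernoulli]) auto

lemma expectation_Pi_pmf_bernoulli_coordinate:
  fixes Q :: "'x \<Rightarrow> bool \<Rightarrow> real"
  assumes A: "finite A" "k \<in> A" and p: "0 \<le> p" "p \<le> 1"
    and F: "\<And>b y. F (b(k := y)) = F b"
  shows "measure_pmf.expectation (Pi_pmf A False (\<lambda>_. bernoulli_pmf p)) (\<lambda>b. Q (F b) (b k))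
       = measure_pmf.expectation (Pi_pmf (A - {k}) False (\<lambda>_. bernoulli_pmf p))
           (\<lambda>b. bernoulli_mean p (Q (F b)))"
proof -
  let ?P = "Pi_pmf (A - {k}) False (\<lambda>_. bernoulli_pmf p)"
  have fA: "finite (A - {k})" using A by auto
  have int: "integrable ?P f" for f :: "_ \<Rightarrow> real"
    using integrable_measure_pmf_finite[OF finite_set_Pi_pmf_bernoulli[OF fA]] by blast
  have "A = insert k (A - {k})" using A by auto
  then have eq: "Pi_pmf A False (\<lambda>_. bernoulli_pmf p) =
      bernoulli_pmf p \<bind> (\<lambda>y. map_pmf (\<lambda>f. f(k := y)) ?P)"
    using Pi_pmf_insert'[OF fA, of k False "\<lambda>_. bernoulli_pmf p"]
    by (simp add: map_pmf_def)
  have fin: "finite (set_pmf (map_pmf (\<lambda>f. f(k := y)) ?P))" for y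
    using finite_set_Pi_pmf_bernoulli[OF fA] by simp
  have "measure_pmf.expectation (Pi_pmf A False (\<lambda>_. bernoulli_pmf p)) (\<lambda>b. Q (F b) (b k))
      = (\<Sum>y\<in>UNIV. pmf (bernoulli_pmf p) y *\<^sub>R
           measure_pmf.expectation (map_pmf (\<lambda>f. f(k := y)) ?P) (\<lambda>b. Q (F b) (b k)))"
    unfolding eq by (rule pmf_expectation_bind) (use fin in auto)
  also have "\<dots> = p * measure_pmf.expectation ?P (\<lambda>b. Q (F b) True)
        + (1 - p) * measure_pmf.expectation ?P (\<lambda>b. Q (F b) False)"
    using p by (simp add: UNIV_bool F)
  also have "\<dots> = measure_pmf.expectation ?P (\<lambda>b. bernoulli_mean p (Q (F b)))"
    by (simp add: bernoulli_mean_def Bochner_Integration.integral_add[OF int int])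
  finally show ?thesis .
qed

text \<open>With a solution h of the Poisson equation, the reward at step k equals c plus a term with
  zero conditional mean plus the increment h(state k) - h(state k+1); the increments telescope
  and h is bounded on the finite state space, so the Cesaro average tends to c.\<close>
lemma avg_reward_tendsto_of_poisson:
  fixes g :: "'s \<Rightarrow> bool \<Rightarrow> real" and h :: "'s \<Rightarrow> real"
  assumes p: "0 \<le> p" "p \<le> 1" and S: "finite S" "s0 \<in> S" "\<And>m y. m \<in> S \<Longrightarrow> nx m y \<in> S"
    and poisson: "\<And>m. m \<in> S \<Longrightarrow> h m + c = bernoulli_mean p (\<lambda>y. g m y + h (nx m y))"
  shows "avg_reward p nx s0 g \<longlonglongrightarrow> c"
proof -
  let ?x = "state_path nx s0"
  define G where "G m y = g m y - c + h (nx m y) - h m" for m y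
  have inS: "?x b k \<in> S" for b k
    using S(2,3) by (rule state_path_in_invariant)
  have telescope: "(\<Sum>k\<le>T. g (?x b k) (b k))
      = real (T + 1) * c + h s0 - h (?x b (Suc T)) + (\<Sum>k\<le>T. G (?x b k) (b k))" for b T
    by (induction T) (auto simp: G_def algebra_simps)
  have martingale_increment: "measure_pmf.expectation (coins p T) (\<lambda>b. G (?x b k) (b k)) = 0"
    if "k \<le> T" for k T
  proof -
    have "measure_pmf.expectation (coins p T) (\<lambda>b. G (?x b k) (b k))
       = measure_pmf.expectation (Pi_pmf ({..T} - {k}) False (\<lambda>_. bernoulli_pmf p))
           (\<lambda>b. bernoulli_mean p (G (?x b k)))"
      unfolding coins_def
      by (rule expectation_Pi_pmf_bernoulli_coordinate) (use that p state_path_fun_upd in auto)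
    also have "\<dots> = 0"
      using poisson[OF inS] by (simp add: G_def bernoulli_mean_def algebra_simps)
    finally show ?thesis .
  qed
  define e where "e T = measure_pmf.expectation (coins p T) (\<lambda>b. h (?x b (Suc T)))" for T
  have avg_eq: "avg_reward p nx s0 g T = c + (h s0 - e T) / real (T + 1)" for T
  proof -
    have "avg_reward p nx s0 g T = (real (T + 1) * c + h s0 - e T
        + (\<Sum>k\<le>T. measure_pmf.expectation (coins p T) (\<lambda>b. G (?x b k) (b k)))) / real (T + 1)"
      unfolding avg_reward_def telescope e_def
      by (simp add: Bochner_Integration.integral_sum)
    then show ?thesis
      using martingale_increment by (simp add: field_simps)
  qed
  define H where "H = Max (abs ` h ` S)"
  have h_bound: "\<bar>h (?x b k)\<bar> \<le> H" for b k
    unfolding H_def using S inS[of b k] by (intro Max_ge) auto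
  have e_bound: "\<bar>e T\<bar> \<le> H" for T
  proof -
    have "\<bar>e T\<bar> \<le> measure_pmf.expectation (coins p T) (\<lambda>b. \<bar>h (?x b (Suc T))\<bar>)"
      unfolding e_def by (rule integral_abs_bound)
    also have "\<dots> \<le> measure_pmf.expectation (coins p T) (\<lambda>b. H)"
      by (rule integral_mono) (use h_bound[of _ "Suc T"] in auto)
    finally show ?thesis by simp
  qed
  have "(\<lambda>T. (h s0 - e T) / real (T + 1)) \<longlonglongrightarrow> 0"
  proof (rule Lim_null_comparison)
    show "\<forall>\<^sub>F T in sequentially. norm ((h s0 - e T) / real (T + 1))
        \<le> (\<bar>h s0\<bar> + H) * inverse (real (Suc T))"
    proof (intro always_eventually allI)
      fix T
      have "\<bar>h s0 - e T\<bar> \<le> \<bar>h s0\<bar> + H"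
        using e_bound[of T] by linarith
      then show "norm ((h s0 - e T) / real (T + 1)) \<le> (\<bar>h s0\<bar> + H) * inverse (real (Suc T))"
        by (simp add: divide_simps)
    qed
    show "(\<lambda>T. (\<bar>h s0\<bar> + H) * inverse (real (Suc T))) \<longlonglongrightarrow> 0"
      using tendsto_mult_right_zero[OF LIMSEQ_inverse_real_of_nat] by simp
  qed
  then have "(\<lambda>T. c + (h s0 - e T) / real (T + 1)) \<longlonglongrightarrow> c"
    using tendsto_add[OF tendsto_const] by fastforce
  moreover have "avg_reward p nx s0 g = (\<lambda>T. c + (h s0 - e T) / real (T + 1))"
    using avg_eq by (rule ext)
  ultimately show ?thesis
    by simp
qed

lemma sum_atLeastLessThan_const_diff:
  fixes f :: "nat \<Rightarrow> real"
  assumes "1 \<le> m"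
  shows "(\<Sum>i=1..<m. c - f i) = (real m - 1) * c - (\<Sum>i=1..<m. f i)"
  using assms by (simp add: sum_subtractf of_nat_diff algebra_simps)

lemma avg_reward_tendsto_cycle:
  fixes g :: "nat \<Rightarrow> bool \<Rightarrow> real"
  assumes p: "0 \<le> p" "p \<le> 1" and J: "1 \<le> J"
    and nx: "\<And>y. nx 0 y = 1" "\<And>m y. 1 \<le> m \<Longrightarrow> m < J \<Longrightarrow> nx m y = Suc m" "\<And>y. nx J y = 1"
  shows "avg_reward p nx 0 g \<longlonglongrightarrow>
    ((\<Sum>m=1..<J. bernoulli_mean p (g m)) + bernoulli_mean p (g J)) / real J"
proof -
  let ?g = "\<lambda>m. bernoulli_mean p (g m)"
  define c where "c = ((\<Sum>m=1..<J. ?g m) + ?g J) / real J"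
  \<comment> \<open>relative value of age m: the reward deficit accumulated along the cycle before m\<close>
  define h where "h m = (if m = 0 then ?g 0 - c else \<Sum>i=1..<m. c - ?g i)" for m
  have poisson: "h m + c = bernoulli_mean p (\<lambda>y. g m y + h (nx m y))" if "m \<le> J" for m
  proof -
    consider "m = 0" | "1 \<le> m" "m < J" | "m = J"
      using \<open>m \<le> J\<close> by linarith
    then show ?thesis
    proof cases
      case 3
      have "real J * c = (\<Sum>m=1..<J. ?g m) + ?g J"
        using J by (simp add: c_def)
      moreover have "h J = (real J - 1) * c - (\<Sum>i=1..<J. ?g i)"
        using J sum_atLeastLessThan_const_diff[OF J] by (simp add: h_def)
      moreover have "h 1 = 0"
        by (simp add: h_def)
      ultimately show ?thesis
        using 3 nx(3) by (simp add: algebra_simps)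
    qed (use nx in \<open>auto simp: h_def\<close>)
  qed
  have closed: "nx m y \<le> J" if "m \<le> J" for m y
    using that J nx by (cases "m = 0 \<or> m = J") (auto simp: Suc_leI)
  show ?thesis
    unfolding c_def[symmetric]
    by (rule avg_reward_tendsto_of_poisson[where S="{..J}" and h=h]) (use p poisson closed in auto)
qed

lemma avg_reward_tendsto_cycle_coin:
  fixes g :: "nat \<Rightarrow> bool \<Rightarrow> real"
  assumes p: "0 \<le> p" "p \<le> 1" and J: "1 \<le> J"
    and nx: "\<And>y. nx 0 y = 1" "\<And>m y. 1 \<le> m \<Longrightarrow> m < J \<Longrightarrow> nx m y = Suc m"
      "nx J True = 1" "nx J False = Suc J" "\<And>y. nx (Suc J) y = 1"
  shows "avg_reward p nx 0 g \<longlonglongrightarrow>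
    ((\<Sum>m=1..<J. bernoulli_mean p (g m)) + p * g J True
       + (1 - p) * (g J False + bernoulli_mean p (g (Suc J)))) / (real J + 1 - p)"
proof -
  let ?g = "\<lambda>m. bernoulli_mean p (g m)"
  define c where "c = ((\<Sum>m=1..<J. ?g m) + p * g J True
       + (1 - p) * (g J False + ?g (Suc J))) / (real J + 1 - p)"
  define h where
    "h m = (if m = 0 then ?g 0 - c else if m = Suc J then ?g (Suc J) - c else \<Sum>i=1..<m. c - ?g i)"
    for m
  have poisson: "h m + c = bernoulli_mean p (\<lambda>y. g m y + h (nx m y))" if "m \<le> Suc J" for m
  proof -
    consider "m = 0" | "1 \<le> m" "m < J" | "m = J" | "m = Suc J"
      using \<open>m \<le> Suc J\<close> by linarith
    then show ?thesis
    proof cases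
      case 3
      have "(real J + 1 - p) * c = (\<Sum>m=1..<J. ?g m) + p * g J True
          + (1 - p) * (g J False + ?g (Suc J))"
        using p J by (simp add: c_def)
      moreover have "h J = (real J - 1) * c - (\<Sum>i=1..<J. ?g i)"
        using J sum_atLeastLessThan_const_diff[OF J] by (simp add: h_def)
      moreover have h_renewal: "h 1 = 0" "h (Suc J) = ?g (Suc J) - c"
        using J by (simp_all add: h_def)
      have "bernoulli_mean p (\<lambda>y. g J y + h (nx J y))
          = p * g J True + (1 - p) * (g J False + ?g (Suc J)) - (1 - p) * c"
        unfolding bernoulli_mean_def nx(3,4) h_renewal by (simp add: algebra_simps)
      ultimately show ?thesis
        using 3 by (simp add: algebra_simps)
    qed (use nx J in \<open>auto simp: h_def\<close>)
  qed
  have closed: "nx m y \<le> Suc J" if "m \<le> Suc J" for m y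
    using that J nx by (cases "m = 0 \<or> m = J \<or> m = Suc J") (auto, cases y, auto)
  show ?thesis
    unfolding c_def[symmetric]
    by (rule avg_reward_tendsto_of_poisson[where S="{..Suc J}" and h=h]) (use p poisson closed in auto)
qed

lemma vth_terms_mono:
  assumes "0 \<le> \<theta>" "0 \<le> x" "x \<le> y"
  shows "sqrt (x * \<theta>) \<le> sqrt (y * \<theta>)"
    and "sqrt x * sqrt (sqrt (x * \<theta>) + x / 4) \<le> sqrt y * sqrt (sqrt (y * \<theta>) + y / 4)"
proof -
  show sqrt_le: "sqrt (x * \<theta>) \<le> sqrt (y * \<theta>)"
    using assms by (simp add: mult_right_mono)
  have "sqrt (sqrt (x * \<theta>) + x / 4) \<le> sqrt (sqrt (y * \<theta>) + y / 4)"
    by (intro real_sqrt_le_mono add_mono sqrt_le) (use assms in auto)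
  then show "sqrt x * sqrt (sqrt (x * \<theta>) + x / 4) \<le> sqrt y * sqrt (sqrt (y * \<theta>) + y / 4)"
    using assms by (intro mult_mono) auto
qed

lemma vth_strict_mono:
  assumes "0 \<le> \<theta>" "0 \<le> x" "x < y"
  shows "vth \<theta> x < vth \<theta> y"
  using vth_terms_mono[OF assms(1,2), of y] assms unfolding vth_def by linarith

lemma eta_strict_antimono:
  assumes "0 \<le> \<alpha>" "\<alpha> \<le> 1" "0 \<le> \<theta>" "0 \<le> x" "x < y"
  shows "eta \<alpha> \<theta> j y < eta \<alpha> \<theta> j x"
proof -
  have eta_eq: "eta \<alpha> \<theta> j l = 1 - \<alpha>^j - (1 - \<alpha>^j) * sqrt (l * \<theta>) - l / 2
      - sqrt l * sqrt (sqrt (l * \<theta>) + l / 4)" for l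
    unfolding eta_def vth_def by (simp add: algebra_simps)
  have "0 \<le> 1 - \<alpha>^j"
    using assms by (simp add: power_le_one)
  then have "(1 - \<alpha>^j) * sqrt (x * \<theta>) \<le> (1 - \<alpha>^j) * sqrt (y * \<theta>)"
    using vth_terms_mono(1)[OF assms(3,4), of y] assms by (intro mult_left_mono) auto
  then show ?thesis
    using vth_terms_mono(2)[OF assms(3,4), of y] assms unfolding eta_eq by linarith
qed

lemma lam_th_pos: "0 < \<theta> \<Longrightarrow> 0 < lam_th \<theta>"
  unfolding lam_th_def by (simp add: add_pos_nonneg add_nonneg_eq_0_iff)

lemma vth_lam_th:
  assumes "0 < \<theta>"
  shows "vth \<theta> (lam_th \<theta>) = 1"
proof -
  define t where "t = sqrt \<theta>"
  have t: "0 < t" "0 < 1 + t" "\<theta> = t * t"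
    using assms by (auto simp: t_def add_pos_pos)
  have lam: "lam_th \<theta> = (1 / (1 + t))^2"
    unfolding lam_th_def t_def by (simp add: power_divide)
  have "lam_th \<theta> * \<theta> = (t / (1 + t))^2"
    unfolding lam using t by (simp add: power2_eq_square field_simps)
  then have sqrt_lam_theta: "sqrt (lam_th \<theta> * \<theta>) = t / (1 + t)"
    using t by simp
  have "t / (1 + t) + lam_th \<theta> / 4 = ((2 * t + 1) / (2 * (1 + t)))^2"
    unfolding lam using t by (simp add: power2_eq_square divide_simps) (simp add: algebra_simps)
  then have sqrt_inner: "sqrt (t / (1 + t) + lam_th \<theta> / 4) = (2 * t + 1) / (2 * (1 + t))"
    using t by simp
  have sqrt_lam: "sqrt (lam_th \<theta>) = 1 / (1 + t)"
    unfolding lam using t by simp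
  show ?thesis
    unfolding vth_def sqrt_lam_theta sqrt_inner sqrt_lam unfolding lam using t
    by (simp add: power2_eq_square divide_simps) (simp add: algebra_simps)
qed

lemma lam_star_root:
  assumes "0 \<le> \<alpha>" "\<alpha> < 1" "0 < \<theta>"
  shows "lam_star \<alpha> \<theta> j \<in> {0..lam_th \<theta>}" and "eta \<alpha> \<theta> j (lam_star \<alpha> \<theta> j) = 0"
proof -
  let ?f = "eta \<alpha> \<theta> j"
  have "?f (lam_th \<theta>) \<le> 0 \<and> 0 \<le> ?f 0"
  proof -
    have "sqrt (lam_th \<theta> * \<theta>) \<le> vth \<theta> (lam_th \<theta>)"
      unfolding vth_def using lam_th_pos[OF assms(3)] assms by simp
    then show ?thesis
      unfolding eta_def vth_lam_th[OF assms(3)] using assms by (simp add: vth_def power_le_one)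
  qed
  moreover have "continuous_on {0..lam_th \<theta>} ?f"
    unfolding eta_def vth_def by (intro continuous_intros) auto
  ultimately have "\<exists>l \<in> {0..lam_th \<theta>}. ?f l = 0"
    using IVT2'[of ?f "lam_th \<theta>" 0 0] lam_th_pos[OF assms(3)] by auto
  moreover have "l1 = l2"
    if "l1 \<in> {0..lam_th \<theta>}" "?f l1 = 0" "l2 \<in> {0..lam_th \<theta>}" "?f l2 = 0" for l1 l2
    using eta_strict_antimono[of \<alpha> \<theta> l1 l2 j] eta_strict_antimono[of \<alpha> \<theta> l2 l1 j] that assms
    by (cases l1 l2 rule: linorder_cases) auto
  ultimately have "\<exists>!l. l \<in> {0..lam_th \<theta>} \<and> ?f l = 0"
    by blast
  then have "lam_star \<alpha> \<theta> j \<in> {0..lam_th \<theta>} \<and> ?f (lam_star \<alpha> \<theta> j) = 0"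
    unfolding lam_star_def by (rule theI')
  then show "lam_star \<alpha> \<theta> j \<in> {0..lam_th \<theta>}" "?f (lam_star \<alpha> \<theta> j) = 0"
    by auto
qed

lemma eta_neg_above_lam_star:
  assumes "0 \<le> \<alpha>" "\<alpha> < 1" "0 < \<theta>" "lam_star \<alpha> \<theta> j < l"
  shows "eta \<alpha> \<theta> j l < 0"
  using lam_star_root[OF assms(1-3), of j] eta_strict_antimono[of \<alpha> \<theta> "lam_star \<alpha> \<theta> j" l j] assms
  by auto

lemma eta_pos_below_lam_star:
  assumes "0 \<le> \<alpha>" "\<alpha> < 1" "0 < \<theta>" "0 \<le> l" "l < lam_star \<alpha> \<theta> j"
  shows "0 < eta \<alpha> \<theta> j l"
  using lam_star_root[OF assms(1-3), of j] eta_strict_antimono[of \<alpha> \<theta> l "lam_star \<alpha> \<theta> j" j] assms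
  by auto

lemma inverse_diff_inverse_affine:
  fixes s q :: real
  assumes "s \<noteq> 0" "1 - q * (1 - s) \<noteq> 0"
  shows "1 / s - 1 / (1 - q * (1 - s)) = (1 - s) / s * ((1 - q) / (1 - q * (1 - s)))"
  using assms by (simp add: divide_simps) (simp add: algebra_simps)

lemma Vpost_inactive: "\<not> active \<theta> lam V y \<Longrightarrow> Vpost \<theta> lam V y = V"
  by (simp add: Vpost_def tk_def SM_def)

lemma tk_active: "active \<theta> lam V y \<Longrightarrow> tk \<theta> lam V y = 1"
  and tk_inactive: "\<not> active \<theta> lam V y \<Longrightarrow> tk \<theta> lam V y = 0"
  and SM_active: "active \<theta> lam V y \<Longrightarrow> SM \<theta> lam V y = 1 / sqrt (lam * \<theta>) - 1 / V"
  by (simp_all add: tk_def SM_def)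

locale myopic_policy =
  fixes \<alpha> \<theta> lam :: real
  assumes alpha_nonneg: "0 \<le> \<alpha>" and alpha_less_1: "\<alpha> < 1" and theta_pos: "0 < \<theta>"
    and lam_pos: "0 < lam" and lam_less_lam_th: "lam < lam_th \<theta>"
begin

definition Vstar :: real where
  "Vstar = sqrt (lam * \<theta>)"

lemma Vstar_pos: "0 < Vstar"
  using theta_pos lam_pos by (simp add: Vstar_def)

lemma Vstar_less_vth: "Vstar < vth \<theta> lam"
  unfolding vth_def Vstar_def using theta_pos lam_pos by (simp add: add_pos_nonneg)

lemma vth_less_1: "vth \<theta> lam < 1"
  using vth_strict_mono[of \<theta> lam "lam_th \<theta>"] vth_lam_th theta_pos lam_pos lam_less_lam_th by simp

text \<open>The age is the number of slots since the last activation; age 0 is the initial slot,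
  where V_0 = 1.\<close>
definition prior_at_age :: "nat \<Rightarrow> real" where
  "prior_at_age m = (if m = 0 then 1 else 1 - \<alpha>^m * (1 - Vstar))"

definition next_age :: "nat \<Rightarrow> bool \<Rightarrow> nat" where
  "next_age m y = (if active \<theta> lam (prior_at_age m) y then 1 else Suc m)"

lemma Vstar_less_1: "Vstar < 1"
  using Vstar_less_vth vth_less_1 by linarith

lemma prior_at_age_ge_Vstar: "Vstar \<le> prior_at_age m"
proof (cases "m = 0")
  case True
  then show ?thesis
    using Vstar_less_1 by (simp add: prior_at_age_def)
next
  case False
  have "\<alpha>^m * (1 - Vstar) \<le> 1 - Vstar"
    using alpha_nonneg alpha_less_1 Vstar_less_1 by (intro mult_left_le_one_le) (auto simp: power_le_one)
  moreover have "prior_at_age m = 1 - \<alpha>^m * (1 - Vstar)"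
    using False by (simp add: prior_at_age_def)
  ultimately show ?thesis
    by linarith
qed

lemma prior_at_age_pos: "0 < prior_at_age m"
  using prior_at_age_ge_Vstar[of m] Vstar_pos by linarith

lemma prior_at_age_mono:
  assumes "1 \<le> m" "m \<le> n"
  shows "prior_at_age m \<le> prior_at_age n"
proof -
  have "\<alpha>^n * (1 - Vstar) \<le> \<alpha>^m * (1 - Vstar)"
    using assms alpha_nonneg alpha_less_1 Vstar_less_1 by (intro mult_right_mono power_decreasing) auto
  then show ?thesis
    using assms by (simp add: prior_at_age_def)
qed

lemma prior_at_age_minus_vth: "1 \<le> m \<Longrightarrow> prior_at_age m - vth \<theta> lam = eta \<alpha> \<theta> m lam"
  by (simp add: prior_at_age_def eta_def Vstar_def)

lemma active_age_0: "active \<theta> lam (prior_at_age 0) y"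
  using vth_less_1 by (simp add: active_def prior_at_age_def)

lemma Vpost_active: "active \<theta> lam V y \<Longrightarrow> 0 < V \<Longrightarrow> Vpost \<theta> lam V y = Vstar"
  using Vstar_pos by (simp add: Vpost_def tk_def SM_def Vstar_def field_simps)

lemma Vprior_eq_prior_at_age: "Vprior \<alpha> \<theta> lam b k = prior_at_age (state_path next_age 0 b k)"
proof (induction k)
  case 0
  then show ?case
    by (simp add: prior_at_age_def)
next
  case (Suc k)
  let ?m = "state_path next_age 0 b k"
  show ?case
  proof (cases "active \<theta> lam (prior_at_age ?m) (b k)")
    case True
    then have "state_path next_age 0 b (Suc k) = 1"
      by (simp add: next_age_def)
    moreover have "Vprior \<alpha> \<theta> lam b (Suc k) = 1 - \<alpha> * (1 - Vstar)"
      using Suc Vpost_active[OF True prior_at_age_pos] by simp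
    ultimately show ?thesis
      by (simp add: prior_at_age_def)
  next
    case False
    then have "?m \<noteq> 0"
      using active_age_0 by metis
    moreover have "state_path next_age 0 b (Suc k) = Suc ?m"
      using False by (simp add: next_age_def)
    moreover have "Vprior \<alpha> \<theta> lam b (Suc k) = 1 - \<alpha> * (1 - prior_at_age ?m)"
      using Suc Vpost_inactive[OF False] by simp
    ultimately show ?thesis
      by (simp add: prior_at_age_def)
  qed
qed

lemma Mavg_eq_avg_reward:
  "Mavg \<alpha> \<theta> lam p = avg_reward p next_age 0 (\<lambda>m. Vpost \<theta> lam (prior_at_age m))"
  by (simp add: fun_eq_iff Mavg_def avg_reward_def Vprior_eq_prior_at_age)

lemma Cavg_eq_avg_reward:
  assumes "\<theta> = \<phi> / cTX"
  shows "Cavg \<alpha> cTX \<phi> NS lam p = avg_reward p next_age 0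
    (\<lambda>m y. 1 / real NS * tk \<theta> lam (prior_at_age m) y * (cTX + \<phi> * SM \<theta> lam (prior_at_age m) y))"
  unfolding Cavg_def avg_reward_def assms[symmetric] by (simp add: Vprior_eq_prior_at_age)

lemma inactive_before:
  assumes "lam_star \<alpha> \<theta> (J - 1) < lam" "1 \<le> m" "m < J"
  shows "\<not> active \<theta> lam (prior_at_age m) y"
proof -
  have "1 \<le> J - 1"
    using assms by linarith
  then have "prior_at_age (J - 1) < vth \<theta> lam"
    using eta_neg_above_lam_star[OF alpha_nonneg alpha_less_1 theta_pos assms(1)]
      prior_at_age_minus_vth[of "J - 1"] by simp
  moreover have "prior_at_age m \<le> prior_at_age (J - 1)"
    using assms by (intro prior_at_age_mono) auto
  ultimately have "prior_at_age m < vth \<theta> lam"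
    by linarith
  then show ?thesis
    by (simp add: active_def)
qed

lemma active_below_lam_star:
  assumes "1 \<le> J" "lam < lam_star \<alpha> \<theta> J"
  shows "active \<theta> lam (prior_at_age J) y"
  using eta_pos_below_lam_star[OF alpha_nonneg alpha_less_1 theta_pos _ assms(2)]
    prior_at_age_minus_vth[OF assms(1)] lam_pos by (simp add: active_def)

lemma prior_at_age_lam_star:
  assumes "1 \<le> J" "lam = lam_star \<alpha> \<theta> J"
  shows "prior_at_age J = vth \<theta> lam"
  using lam_star_root(2)[OF alpha_nonneg alpha_less_1 theta_pos, of J]
    prior_at_age_minus_vth[OF assms(1)] assms(2) by simp

lemma vth_less_prior_at_age_Suc:
  assumes "1 \<le> J" "prior_at_age J = vth \<theta> lam"
  shows "vth \<theta> lam < prior_at_age (Suc J)"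
proof -
  have "0 < \<alpha>"
  proof (rule ccontr)
    assume "\<not> 0 < \<alpha>"
    then have "\<alpha>^J = 0"
      using alpha_nonneg assms(1) by simp
    then have "prior_at_age J = 1"
      unfolding prior_at_age_def using assms(1) by simp
    then show False
      using assms(2) vth_less_1 by simp
  qed
  then have "\<alpha>^Suc J * (1 - Vstar) < \<alpha>^J * (1 - Vstar)"
    using alpha_less_1 Vstar_less_1 by (intro mult_strict_right_mono) auto
  then show ?thesis
    using assms by (simp add: prior_at_age_def)
qed

lemma active_at_lam_star_iff:
  assumes "1 \<le> J" "lam = lam_star \<alpha> \<theta> J"
  shows "active \<theta> lam (prior_at_age J) y \<longleftrightarrow> y"
  using prior_at_age_lam_star[OF assms] by (simp add: active_def)

lemma active_after_lam_star:
  assumes "1 \<le> J" "lam = lam_star \<alpha> \<theta> J"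
  shows "active \<theta> lam (prior_at_age (Suc J)) y"
  using vth_less_prior_at_age_Suc[OF assms(1) prior_at_age_lam_star[OF assms]] by (simp add: active_def)

lemma sum_prior_at_age:
  assumes "1 \<le> J"
  shows "(\<Sum>m=1..<J. prior_at_age m) = real J - 1 - (1 - Vstar) * (\<alpha> - \<alpha>^J) / (1 - \<alpha>)"
  using assms
proof (induction J rule: dec_induct)
  case base
  then show ?case
    using alpha_less_1 by simp
next
  case (step J)
  then show ?case
    using alpha_less_1 by (simp add: prior_at_age_def divide_simps) (simp add: algebra_simps)
qed

lemma Mavg_tendsto_interior:
  assumes p: "0 \<le> p" "p \<le> 1" and J: "1 \<le> J"
    and lam_lower: "lam_star \<alpha> \<theta> (J - 1) < lam" and lam_upper: "lam < lam_star \<alpha> \<theta> J"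
  shows "Mavg \<alpha> \<theta> lam p \<longlonglongrightarrow> 1 - (1 - \<alpha>^J) * (1 - Vstar) / (real J * (1 - \<alpha>))"
proof -
  note active_J = active_below_lam_star[OF J lam_upper]
    and idle = inactive_before[OF lam_lower]
  let ?g = "\<lambda>m. Vpost \<theta> lam (prior_at_age m)"
  have "Mavg \<alpha> \<theta> lam p \<longlonglongrightarrow>
      ((\<Sum>m=1..<J. bernoulli_mean p (?g m)) + bernoulli_mean p (?g J)) / real J"
    unfolding Mavg_eq_avg_reward
    by (rule avg_reward_tendsto_cycle) (use p J active_age_0 active_J idle in \<open>auto simp: next_age_def\<close>)
  also have "(\<Sum>m=1..<J. bernoulli_mean p (?g m)) = (\<Sum>m=1..<J. prior_at_age m)"
    by (intro sum.cong bernoulli_mean_eq_const) (simp_all add: idle Vpost_inactive)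
  also have "bernoulli_mean p (?g J) = Vstar"
    by (intro bernoulli_mean_eq_const Vpost_active active_J prior_at_age_pos)
  also have "((\<Sum>m=1..<J. prior_at_age m) + Vstar) / real J
      = 1 - (1 - \<alpha>^J) * (1 - Vstar) / (real J * (1 - \<alpha>))"
    unfolding sum_prior_at_age[OF J] using J alpha_less_1 by (simp add: field_simps)
  finally show ?thesis .
qed

lemma inverse_Vstar_diff_inverse_prior_at_age:
  assumes "1 \<le> m"
  shows "1 / Vstar - 1 / prior_at_age m
    = (1 - Vstar) / Vstar * ((1 - \<alpha>^m) / (1 - \<alpha>^m * (1 - Vstar)))"
proof -
  have X: "prior_at_age m = 1 - \<alpha>^m * (1 - Vstar)"
    using assms by (simp add: prior_at_age_def)
  have X_nonzero: "1 - \<alpha>^m * (1 - Vstar) \<noteq> 0"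
    using prior_at_age_pos[of m] X by simp
  show ?thesis
    unfolding X using Vstar_pos X_nonzero by (intro inverse_diff_inverse_affine) auto
qed

lemma Cavg_tendsto_interior:
  assumes \<theta>: "\<theta> = \<phi> / cTX" and p: "0 \<le> p" "p \<le> 1" and J: "1 \<le> J"
    and lam_lower: "lam_star \<alpha> \<theta> (J - 1) < lam" and lam_upper: "lam < lam_star \<alpha> \<theta> J"
  shows "Cavg \<alpha> cTX \<phi> NS lam p \<longlonglongrightarrow> 1 / (real NS * real J) *
    (cTX + \<phi> * (1 / Vstar) * ((1 - \<alpha>^J) * (1 - Vstar) / (1 - \<alpha>^J * (1 - Vstar))))"
proof -
  note active_J = active_below_lam_star[OF J lam_upper]
    and idle = inactive_before[OF lam_lower]
  let ?g = "\<lambda>m y. 1 / real NS * tk \<theta> lam (prior_at_age m) y * (cTX + \<phi> * SM \<theta> lam (prior_at_age m) y)"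
  have "Cavg \<alpha> cTX \<phi> NS lam p \<longlonglongrightarrow>
      ((\<Sum>m=1..<J. bernoulli_mean p (?g m)) + bernoulli_mean p (?g J)) / real J"
    unfolding Cavg_eq_avg_reward[OF \<theta>]
    by (rule avg_reward_tendsto_cycle) (use p J active_age_0 active_J idle in \<open>auto simp: next_age_def\<close>)
  also have "(\<Sum>m=1..<J. bernoulli_mean p (?g m)) = 0"
    by (intro sum.neutral ballI bernoulli_mean_eq_const) (simp add: idle tk_inactive)
  also have "bernoulli_mean p (?g J) = (cTX + \<phi> * (1 / Vstar - 1 / prior_at_age J)) / real NS"
    by (intro bernoulli_mean_eq_const) (simp add: active_J tk_active SM_active Vstar_def)
  also have "(0 + (cTX + \<phi> * (1 / Vstar - 1 / prior_at_age J)) / real NS) / real J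
      = 1 / (real NS * real J) *
        (cTX + \<phi> * (1 / Vstar) * ((1 - \<alpha>^J) * (1 - Vstar) / (1 - \<alpha>^J * (1 - Vstar))))"
    unfolding inverse_Vstar_diff_inverse_prior_at_age[OF J] by simp
  finally show ?thesis .
qed

lemma Mavg_tendsto_boundary:
  assumes p: "0 \<le> p" "p \<le> 1" and J: "1 \<le> J"
    and lam_lower: "lam_star \<alpha> \<theta> (J - 1) < lam" and lam_eq: "lam = lam_star \<alpha> \<theta> J"
  shows "Mavg \<alpha> \<theta> lam p \<longlonglongrightarrow>
    1 - (1 - \<alpha>^J * (1 - (1 - \<alpha>) * (1 - p))) * (1 - Vstar) / ((real J + 1 - p) * (1 - \<alpha>))"
proof -
  note active_J = active_at_lam_star_iff[OF J lam_eq]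
    and active_Suc_J = active_after_lam_star[OF J lam_eq]
    and idle = inactive_before[OF lam_lower]
  let ?g = "\<lambda>m. Vpost \<theta> lam (prior_at_age m)"
  have "Mavg \<alpha> \<theta> lam p \<longlonglongrightarrow>
      ((\<Sum>m=1..<J. bernoulli_mean p (?g m)) + p * ?g J True
        + (1 - p) * (?g J False + bernoulli_mean p (?g (Suc J)))) / (real J + 1 - p)"
    unfolding Mavg_eq_avg_reward
    by (rule avg_reward_tendsto_cycle_coin)
      (use p J active_age_0 active_J active_Suc_J idle in \<open>auto simp: next_age_def\<close>)
  also have "(\<Sum>m=1..<J. bernoulli_mean p (?g m)) = (\<Sum>m=1..<J. prior_at_age m)"
    by (intro sum.cong bernoulli_mean_eq_const) (simp_all add: idle Vpost_inactive)
  also have "?g J True = Vstar"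
    using active_J by (simp add: Vpost_active prior_at_age_pos)
  also have "?g J False = prior_at_age J"
    using active_J by (simp add: Vpost_inactive)
  also have "bernoulli_mean p (?g (Suc J)) = Vstar"
    by (intro bernoulli_mean_eq_const Vpost_active active_Suc_J prior_at_age_pos)
  also have "((\<Sum>m=1..<J. prior_at_age m) + p * Vstar + (1 - p) * (prior_at_age J + Vstar))
        / (real J + 1 - p)
      = 1 - (1 - \<alpha>^J * (1 - (1 - \<alpha>) * (1 - p))) * (1 - Vstar) / ((real J + 1 - p) * (1 - \<alpha>))"
  proof -
    have K: "real J + 1 - p \<noteq> 0"
      using J p by linarith
    have "(\<Sum>m=1..<J. prior_at_age m) + p * Vstar + (1 - p) * (prior_at_age J + Vstar)
        = (real J + 1 - p) - (1 - \<alpha>^J * (1 - (1 - \<alpha>) * (1 - p))) * (1 - Vstar) / (1 - \<alpha>)"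
      unfolding sum_prior_at_age[OF J] using J alpha_less_1 by (simp add: prior_at_age_def field_simps)
    then show ?thesis
      using K by (simp add: diff_divide_distrib)
  qed
  finally show ?thesis .
qed

lemma Cavg_tendsto_boundary:
  assumes \<theta>: "\<theta> = \<phi> / cTX" and p: "0 \<le> p" "p \<le> 1" and J: "1 \<le> J"
    and lam_lower: "lam_star \<alpha> \<theta> (J - 1) < lam" and lam_eq: "lam = lam_star \<alpha> \<theta> J"
  shows "Cavg \<alpha> cTX \<phi> NS lam p \<longlonglongrightarrow> 1 / (real NS * (real J + 1 - p)) *
    (cTX + \<phi> * (1 - Vstar) / Vstar *
      (p * (1 - \<alpha>^J) / (1 - \<alpha>^J * (1 - Vstar))
       + (1 - p) * (1 - \<alpha>^(J+1)) / (1 - \<alpha>^(J+1) * (1 - Vstar))))"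
proof -
  note active_J = active_at_lam_star_iff[OF J lam_eq]
    and active_Suc_J = active_after_lam_star[OF J lam_eq]
    and idle = inactive_before[OF lam_lower]
  let ?g = "\<lambda>m y. 1 / real NS * tk \<theta> lam (prior_at_age m) y * (cTX + \<phi> * SM \<theta> lam (prior_at_age m) y)"
  let ?A = "\<lambda>m. (cTX + \<phi> * (1 / Vstar - 1 / prior_at_age m)) / real NS"
  have "Cavg \<alpha> cTX \<phi> NS lam p \<longlonglongrightarrow>
      ((\<Sum>m=1..<J. bernoulli_mean p (?g m)) + p * ?g J True
        + (1 - p) * (?g J False + bernoulli_mean p (?g (Suc J)))) / (real J + 1 - p)"
    unfolding Cavg_eq_avg_reward[OF \<theta>]
    by (rule avg_reward_tendsto_cycle_coin)
      (use p J active_age_0 active_J active_Suc_J idle in \<open>auto simp: next_age_def\<close>)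
  also have "(\<Sum>m=1..<J. bernoulli_mean p (?g m)) = 0"
    by (intro sum.neutral ballI bernoulli_mean_eq_const) (simp add: idle tk_inactive)
  also have "?g J True = ?A J"
    using active_J by (simp add: tk_active SM_active Vstar_def)
  also have "?g J False = 0"
    using active_J by (simp add: tk_inactive)
  also have "bernoulli_mean p (?g (Suc J)) = ?A (Suc J)"
    by (intro bernoulli_mean_eq_const) (simp add: active_Suc_J tk_active SM_active Vstar_def)
  also have "(0 + p * ?A J + (1 - p) * (0 + ?A (Suc J))) / (real J + 1 - p)
      = 1 / (real NS * (real J + 1 - p)) *
        (cTX + \<phi> * (1 - Vstar) / Vstar *
          (p * (1 - \<alpha>^J) / (1 - \<alpha>^J * (1 - Vstar))
           + (1 - p) * (1 - \<alpha>^(J+1)) / (1 - \<alpha>^(J+1) * (1 - Vstar))))"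
  proof -
    have mix: "(0 + p * ((cTX + \<phi> * u) / real NS) + (1 - p) * (0 + (cTX + \<phi> * v) / real NS)) / K
        = 1 / (real NS * K) * (cTX + \<phi> * (p * u + (1 - p) * v))" for u v K
      by (simp add: algebra_simps add_divide_distrib diff_divide_distrib)
    have "p * (1 / Vstar - 1 / prior_at_age J) + (1 - p) * (1 / Vstar - 1 / prior_at_age (Suc J))
        = (1 - Vstar) / Vstar * (p * (1 - \<alpha>^J) / (1 - \<alpha>^J * (1 - Vstar))
           + (1 - p) * (1 - \<alpha>^(J+1)) / (1 - \<alpha>^(J+1) * (1 - Vstar)))"
      using inverse_Vstar_diff_inverse_prior_at_age[OF J]
        inverse_Vstar_diff_inverse_prior_at_age[of "Suc J"]
      by (simp add: distrib_left mult_ac)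
    then show ?thesis
      unfolding mix by simp
  qed
  finally show ?thesis .
qed

end

theorem theorem2:
  fixes \<alpha> cTX \<phi> \<theta> lam p0 :: real and NS B J :: nat
  assumes "0 \<le> \<alpha>" "\<alpha> < 1" "cTX > 0" "\<phi> > 0" "\<theta> = \<phi> / cTX"
    and "B \<ge> 1" "NS \<ge> B"
    and "0 < lam" "lam < lam_th \<theta>"
    and "0 \<le> p0" "p0 \<le> 1"
    and "J \<ge> 1"
    and "lam_star \<alpha> \<theta> (J - 1) < lam" "lam \<le> lam_star \<alpha> \<theta> J"
  shows
   "(lam = lam_star \<alpha> \<theta> J \<longrightarrow>
      (Mavg \<alpha> \<theta> lam p0 \<longlonglongrightarrow>
         1 - (1 - \<alpha>^J * (1 - (1 - \<alpha>) * (1 - p0))) * (1 - sqrt (lam * \<theta>))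
             / ((real J + 1 - p0) * (1 - \<alpha>)))
    \<and> (Cavg \<alpha> cTX \<phi> NS lam p0 \<longlonglongrightarrow>
         1 / (real NS * (real J + 1 - p0)) *
         (cTX + \<phi> * (1 - sqrt (lam * \<theta>)) / sqrt (lam * \<theta>) *
           (p0 * (1 - \<alpha>^J) / (1 - \<alpha>^J * (1 - sqrt (lam * \<theta>)))
            + (1 - p0) * (1 - \<alpha>^(J+1)) / (1 - \<alpha>^(J+1) * (1 - sqrt (lam * \<theta>)))))))
  \<and> (lam < lam_star \<alpha> \<theta> J \<longrightarrow>
      (Mavg \<alpha> \<theta> lam p0 \<longlonglongrightarrow>
         1 - (1 - \<alpha>^J) * (1 - sqrt (lam * \<theta>)) / (real J * (1 - \<alpha>)))
    \<and> (Cavg \<alpha> cTX \<phi> NS lam p0 \<longlonglongrightarrow>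
         1 / (real NS * real J) *
         (cTX + \<phi> * (1 / sqrt (lam * \<theta>)) *
           ((1 - \<alpha>^J) * (1 - sqrt (lam * \<theta>)) / (1 - \<alpha>^J * (1 - sqrt (lam * \<theta>)))))))"
proof -
  note p0 = assms(10,11) and J = assms(12) and lam_lower = assms(13)
  have "0 < \<theta>"
    using assms(3-5) by simp
  then interpret myopic_policy \<alpha> \<theta> lam
    using assms by unfold_locales auto
  show ?thesis
    unfolding Vstar_def[symmetric]
    using Mavg_tendsto_boundary[OF p0 J lam_lower] Cavg_tendsto_boundary[OF assms(5) p0 J lam_lower]
      Mavg_tendsto_interior[OF p0 J lam_lower] Cavg_tendsto_interior[OF assms(5) p0 J lam_lower]
    by blast
qed

end
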